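(* Let $(N,\langle\cdot,\cdot\rangle,\varphi)$ be a modified $H$-type group (see context) with $N$ connected and simply connected. Let $I\subset\mathbb R$ be an interval containing $0$ and $\gamma:I\to N$, $\gamma(t)=\exp(z(t)+x(t))$ with $z(t)\in\mathfrak z$, $x(t)\in\mathfrak v$, a geodesic with $\gamma(0)=1$ and $\dot\gamma(0)=z_0+x_0$, where $z_0\in\mathfrak z$ and $x_0\in\mathfrak v$ are both nonzero. If $\langle x_0,x_0\rangle=0$ or $z_0\in\ker(\mathrm{Rc}|_{\mathfrak z})$, then $z(t)=tz_0$ for all $t\in I$.
   Context: Let $N$ be a 2-step nilpotent real Lie group with Lie algebra $\mathfrak n$, Lie bracket $[\cdot,\cdot]$ and center $\mathfrak z$, endowed with a left-invariant pseudo-Riemannian metric $\langle\cdot,\cdot\rangle$ for which $\mathfrak z$ is nondegenerate. Put $\mathfrak v=\mathfrak z^\perp$. For $z\in\mathfrak z$ define $j(z)\in\mathrm{End}(\mathfrak v)$ by $\langle [x,y],z\rangle=\langle y,j(z)x\rangle$ for all $x,y\in\mathfrak v$. Given a quadratic form $\varphi$ on $\mathfrak z$, $(N,\langle\cdot,\cdot\rangle,\varphi)$ is a modified $H$-type group if $j(z)^2=-\varphi(z)\,\mathrm{Id}_{\mathfrak v}$ for all $z\in\mathfrak z$. The Ricci operator $\mathrm{Rc}$ is defined by $\langle\mathrm{Rc}\,u,w\rangle=\mathrm{Ric}(u,w)$; it maps $\mathfrak z$ into $\mathfrak z$. $\exp$ is the Lie group exponential map (a diffeomorphism here). *)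

theory Defs
  imports "HOL-Analysis.Analysis"
begin

text \<open>
Model: a connected, simply connected 2-step nilpotent Lie group N is identified, via the
(diffeomorphic) exponential map, with its Lie algebra n (a finite-dimensional real vector
space, here a euclidean_space type).  In these exponential coordinates the group law is
p * q = p + q + 1/2 [p,q] (BCH for 2-step nilpotent algebras) and the identity is 0.
\<close>

type_synonym 'n form = "'n \<Rightarrow> 'n \<Rightarrow> real"
type_synonym 'n brk = "'n \<Rightarrow> 'n \<Rightarrow> 'n"

definition center :: "'n::real_vector brk \<Rightarrow> 'n set" where
  "center br = {z. \<forall>y. br z y = 0}"

definition perp_center :: "'n::real_vector form \<Rightarrow> 'n brk \<Rightarrow> 'n set" where
  "perp_center g br = {v. \<forall>z\<in>center br. g v z = 0}"

definition two_step_nilpotent :: "'n::real_vector brk \<Rightarrow> bool" where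
  "two_step_nilpotent br \<longleftrightarrow> bilinear br \<and> (\<forall>a b. br a b = - br b a)
     \<and> (\<forall>a b c. br (br a b) c = 0) \<and> (\<exists>a b. br a b \<noteq> 0)"

definition pr_metric :: "'n::real_vector form \<Rightarrow> bool" where
  "pr_metric g \<longleftrightarrow> bilinear g \<and> (\<forall>u v. g u v = g v u) \<and> (\<forall>u. (\<forall>v. g u v = 0) \<longrightarrow> u = 0)"

text \<open>Left-invariant metric at the point p (in exponential coordinates), with value g at 0:
  G_p(u,v) = g(dL_p^{-1} u, dL_p^{-1} v), where dL_p^{-1} u = u - 1/2 [p,u].\<close>
definition lmetric :: "'n::real_vector form \<Rightarrow> 'n brk \<Rightarrow> 'n \<Rightarrow> 'n \<Rightarrow> 'n \<Rightarrow> real" where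
  "lmetric g br p u v = g (u - (1/2) *\<^sub>R br p u) (v - (1/2) *\<^sub>R br p v)"

text \<open>Geodesic on the interval I: Euler--Lagrange equations of the energy
  L(p,v) = 1/2 G_p(v,v) in the global chart, i.e. for every constant direction w,
  d/dt G_{gamma}(gamma',w) = 1/2 (d_w G)_{gamma}(gamma',gamma').\<close>
definition is_geodesic :: "'n::real_normed_vector form \<Rightarrow> 'n brk \<Rightarrow> real set \<Rightarrow> (real \<Rightarrow> 'n) \<Rightarrow> bool" where
  "is_geodesic g br I \<gamma> \<longleftrightarrow> (\<exists>v. (\<forall>t\<in>I. (\<gamma> has_vector_derivative v t) (at t within I)) \<and>
     (\<forall>t\<in>I. \<forall>w. \<exists>D.
        ((\<lambda>h. lmetric g br (\<gamma> t + h *\<^sub>R w) (v t) (v t)) has_real_derivative D) (at 0) \<and>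
        ((\<lambda>s. lmetric g br (\<gamma> s) (v s) w) has_real_derivative D / 2) (at t within I)))"

text \<open>Levi-Civita connection on left-invariant fields (Koszul formula).\<close>
definition lc :: "'n::real_vector form \<Rightarrow> 'n brk \<Rightarrow> 'n \<Rightarrow> 'n \<Rightarrow> 'n" where
  "lc g br X Y = (THE u. \<forall>W. g u W = (g (br X Y) W - g (br Y W) X + g (br W X) Y) / 2)"

definition curv :: "'n::real_vector form \<Rightarrow> 'n brk \<Rightarrow> 'n \<Rightarrow> 'n \<Rightarrow> 'n \<Rightarrow> 'n" where
  "curv g br X Y Z = lc g br X (lc g br Y Z) - lc g br Y (lc g br X Z) - lc g br (br X Y) Z"

definition ricci :: "'n::euclidean_space form \<Rightarrow> 'n brk \<Rightarrow> 'n \<Rightarrow> 'n \<Rightarrow> real" where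
  "ricci g br Y Z = (\<Sum>b\<in>Basis. curv g br b Y Z \<bullet> b)"

definition ricci_op :: "'n::euclidean_space form \<Rightarrow> 'n brk \<Rightarrow> 'n \<Rightarrow> 'n" where
  "ricci_op g br u = (THE v. \<forall>w. g v w = ricci g br u w)"

definition modified_H_type :: "'n::real_vector form \<Rightarrow> 'n brk \<Rightarrow> ('n \<Rightarrow> real) \<Rightarrow> bool" where
  "modified_H_type g br \<phi> \<longleftrightarrow>
     two_step_nilpotent br \<and> pr_metric g \<and>
     (\<forall>u\<in>center br. (\<forall>v\<in>center br. g u v = 0) \<longrightarrow> u = 0) \<and>
     (\<exists>B. bilinear B \<and> (\<forall>u v. B u v = B v u) \<and> (\<forall>z\<in>center br. \<phi> z = B z z)) \<and>
     (\<exists>j. (\<forall>z\<in>center br. \<forall>x\<in>perp_center g br. j z x \<in> perp_center g br) \<and>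
          (\<forall>z\<in>center br. \<forall>x\<in>perp_center g br. \<forall>y\<in>perp_center g br.
               g (br x y) z = g y (j z x)) \<and>
          (\<forall>z\<in>center br. \<forall>x\<in>perp_center g br. j z (j z x) = - (\<phi> z) *\<^sub>R x))"

end

theory Submission
  imports Defs
begin

(* Write x = vpart o gamma for the component of the geodesic in v and
   U = gamma' - 1/2 [gamma, gamma'] for its left-translated velocity.  In central directions the
   Euler-Lagrange equations say that the central part of U is the constant z0; in directions of v
   they integrate to x' = x0 + j(z0) x, so that x'' = j(z0) x' and <x', x'> = <x0, x0>.  As the
   central part of gamma' is z0 + 1/2 [x, x'], it remains to show [x, x'] = 0.  For central w the
   function P = <[x, x'], w> satisfies P'' = - phi(z0) P + B(z0, w) <x0, x0> with P(0) = P'(0) = 0,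
   where B is the polarisation of phi.  The inhomogeneous term vanishes: trivially if
   <x0, x0> = 0, and if Rc z0 = 0 because on the centre Ric(z, w) = B(z, w) dim v / 4.
   Hence P = 0. *)

section \<open>Calculus on intervals\<close>

lemma has_real_derivative_zero_imp_eq:
  fixes f :: "real \<Rightarrow> real"
  assumes "convex I" "a \<in> I" "t \<in> I"
    and "\<And>s. s \<in> I \<Longrightarrow> (f has_real_derivative 0) (at s within I)"
  shows "f t = f a"
  using has_field_derivative_zero_constant[of I f] assms by metis

lemma linear_has_vector_derivative:
  fixes L :: "'a::euclidean_space \<Rightarrow> 'b::real_normed_vector"
  assumes "linear L" "(f has_vector_derivative f') F"
  shows "((\<lambda>s. L (f s)) has_vector_derivative L f') F"
  using bounded_linear.has_vector_derivative[OF linear_conv_bounded_linear[THEN iffD1, OF assms(1)] assms(2)] .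

lemma oscillator_zero_initial_values:
  fixes P Q :: "real \<Rightarrow> real"
  assumes I: "convex I" "0 \<in> I"
    and P': "\<And>s. s \<in> I \<Longrightarrow> (P has_real_derivative Q s) (at s within I)"
    and Q': "\<And>s. s \<in> I \<Longrightarrow> (Q has_real_derivative - c * P s) (at s within I)"
    and "P 0 = 0" "Q 0 = 0" "t \<in> I"
  shows "P t = 0"
proof (cases "c \<ge> 0")
  case True
  have energy: "Q s ^ 2 + c * P s ^ 2 = 0" if "s \<in> I" for s
  proof -
    have "Q s ^ 2 + c * P s ^ 2 = Q 0 ^ 2 + c * P 0 ^ 2"
      using I that
      by (rule has_real_derivative_zero_imp_eq[of I 0 s "\<lambda>s. Q s ^ 2 + c * P s ^ 2"])
        (rule derivative_eq_intros P' Q' refl | simp)+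
    then show ?thesis using assms by simp
  qed
  have Q_zero: "Q s = 0" if "s \<in> I" for s
  proof -
    have "0 \<le> c * P s ^ 2" using True by simp
    then have "Q s ^ 2 = 0" using energy[OF that] zero_le_power2[of "Q s"] by linarith
    then show ?thesis by simp
  qed
  have "P t = P 0"
  proof (rule has_real_derivative_zero_imp_eq[OF I \<open>t \<in> I\<close>])
    fix s assume "s \<in> I"
    then show "(P has_real_derivative 0) (at s within I)" using P' Q_zero by metis
  qed
  then show ?thesis using assms by simp
next
  case False
  define k where "k = sqrt (- c)"
  have k: "k > 0" "c = - (k * k)"
    using False by (auto simp: k_def real_sqrt_mult[symmetric])
  have "exp (k * t) * (Q t - k * P t) = exp (k * 0) * (Q 0 - k * P 0)"
    using I \<open>t \<in> I\<close>
    by (rule has_real_derivative_zero_imp_eq[of I 0 t "\<lambda>s. exp (k * s) * (Q s - k * P s)"])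
      ((rule derivative_eq_intros P' Q' refl | simp)+, simp add: algebra_simps k)
  moreover have "exp (- k * t) * (Q t + k * P t) = exp (- k * 0) * (Q 0 + k * P 0)"
    using I \<open>t \<in> I\<close>
    by (rule has_real_derivative_zero_imp_eq[of I 0 t "\<lambda>s. exp (- k * s) * (Q s + k * P s)"])
      ((rule derivative_eq_intros P' Q' refl | simp)+, simp add: algebra_simps k)
  ultimately have "Q t - k * P t = 0" "Q t + k * P t = 0"
    using assms by simp_all
  then show ?thesis using k by simp
qed

section \<open>Traces of endomorphisms of a Euclidean space\<close>

definition lin_trace :: "('a::euclidean_space \<Rightarrow> 'a) \<Rightarrow> real" where
  "lin_trace F = (\<Sum>b\<in>Basis. F b \<bullet> b)"

lemma lin_trace_comp:
  assumes "linear F"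
  shows "lin_trace (F \<circ> G) = (\<Sum>b\<in>Basis. \<Sum>c\<in>Basis. (G b \<bullet> c) * (F c \<bullet> b))"
  unfolding lin_trace_def o_def
  by (rule sum.cong[OF refl], rule Linear_Algebra.linear_componentwise[OF assms])

lemma lin_trace_comp_commute:
  assumes "linear F" "linear G"
  shows "lin_trace (F \<circ> G) = lin_trace (G \<circ> F)"
  unfolding lin_trace_comp[OF assms(1)] lin_trace_comp[OF assms(2)]
  by (subst sum.swap) (simp add: mult.commute)

definition orth_proj :: "'a::euclidean_space set \<Rightarrow> 'a \<Rightarrow> 'a" where
  "orth_proj S x = (SOME y. y \<in> span S \<and> (\<forall>w\<in>span S. orthogonal (x - y) w))"

lemma orth_proj_spec:
  shows orth_proj_in_span: "orth_proj S x \<in> span S"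
    and orthogonal_orth_proj: "w \<in> span S \<Longrightarrow> orthogonal (x - orth_proj S x) w"
proof -
  obtain y z where "y \<in> span S" "\<And>w. w \<in> span S \<Longrightarrow> orthogonal z w" "x = y + z"
    using orthogonal_subspace_decomp_exists[of S x] by blast
  then have "\<exists>y. y \<in> span S \<and> (\<forall>w\<in>span S. orthogonal (x - y) w)"
    by (intro exI[of _ y]) simp
  then have "orth_proj S x \<in> span S \<and> (\<forall>w\<in>span S. orthogonal (x - orth_proj S x) w)"
    unfolding orth_proj_def by (rule someI_ex)
  then show "orth_proj S x \<in> span S" "w \<in> span S \<Longrightarrow> orthogonal (x - orth_proj S x) w"
    by blast+
qed

lemma orth_proj_unique:
  assumes "y \<in> span S" "\<And>w. w \<in> span S \<Longrightarrow> orthogonal (x - y) w"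
  shows "orth_proj S x = y"
proof -
  have d: "orth_proj S x - y \<in> span S"
    by (simp add: assms span_diff orth_proj_in_span)
  have "orthogonal (orth_proj S x - y) (orth_proj S x - y)"
    using assms(2)[OF d] orthogonal_orth_proj[OF d]
    by (simp add: orthogonal_def inner_diff_left)
  then show ?thesis by (simp add: orthogonal_def)
qed

lemma orth_proj_id: "x \<in> span S \<Longrightarrow> orth_proj S x = x"
  by (rule orth_proj_unique) (auto simp: orthogonal_def)

lemma linear_orth_proj: "linear (orth_proj S)"
proof (rule linearI)
  fix x y :: 'a and r :: real
  show "orth_proj S (x + y) = orth_proj S x + orth_proj S y"
    using orthogonal_orth_proj[of _ S x] orthogonal_orth_proj[of _ S y]
    by (intro orth_proj_unique)
      (auto simp: span_add orth_proj_in_span orthogonal_def inner_diff_left inner_add_left)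
  show "orth_proj S (r *\<^sub>R x) = r *\<^sub>R orth_proj S x"
    using orthogonal_orth_proj[of _ S x]
    by (intro orth_proj_unique)
      (auto simp: span_scale orth_proj_in_span orthogonal_def inner_diff_left
        simp flip: scaleR_diff_right)
qed

lemma lin_trace_orth_proj: "lin_trace (orth_proj S) = (\<Sum>b\<in>Basis. norm (orth_proj S b) ^ 2)"
proof -
  have "orth_proj S b \<bullet> b = orth_proj S b \<bullet> orth_proj S b" for b
  proof -
    have "orthogonal (b - orth_proj S b) (orth_proj S b)"
      by (rule orthogonal_orth_proj[OF orth_proj_in_span])
    then have "b \<bullet> orth_proj S b - orth_proj S b \<bullet> orth_proj S b = 0"
      by (simp add: orthogonal_def inner_diff_left)
    then show ?thesis by (simp add: inner_commute)
  qed
  then show ?thesis by (simp add: lin_trace_def power2_norm_eq_inner)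
qed

lemma lin_trace_idempotent_pos:
  assumes P: "linear P" and idem: "\<And>x. P (P x) = P x" and "P a \<noteq> 0"
  shows "lin_trace P > 0"
proof -
  define Q where "Q = orth_proj (range P)"
  have span_range: "span (range P) = range P"
    by (simp add: P linear_subspace_image)
  have QP: "Q \<circ> P = P"
    by (auto simp: Q_def span_range orth_proj_id)
  have PQ: "P \<circ> Q = Q"
  proof
    fix x
    obtain y where "Q x = P y"
      using orth_proj_in_span[of "range P" x] by (auto simp: Q_def span_range)
    then show "(P \<circ> Q) x = Q x" by (simp add: idem)
  qed
  have "lin_trace P = lin_trace (Q \<circ> P)" by (simp only: QP)
  also have "\<dots> = lin_trace (P \<circ> Q)"
    unfolding Q_def by (rule lin_trace_comp_commute[OF linear_orth_proj P])
  also have "\<dots> = lin_trace Q" by (simp only: PQ)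
  also have "\<dots> = (\<Sum>b\<in>Basis. norm (Q b) ^ 2)"
    unfolding Q_def by (rule lin_trace_orth_proj)
  also have "\<dots> > 0"
  proof -
    have "Q \<noteq> (\<lambda>_. 0)"
      using \<open>P a \<noteq> 0\<close> orth_proj_id[of "P a" "range P"] by (auto simp: Q_def span_range)
    then obtain b where "b \<in> Basis" "Q b \<noteq> 0"
      using linear_eq_stdbasis[OF linear_orth_proj linear_zero, of "range P"]
      unfolding Q_def by blast
    then show ?thesis by (intro sum_pos2[of Basis b]) auto
  qed
  finally show ?thesis .
qed

section \<open>Nondegenerate symmetric bilinear forms\<close>

locale nondegenerate_form =
  fixes g :: "'n::euclidean_space \<Rightarrow> 'n \<Rightarrow> real"
  assumes bilinear_form: "bilinear g"
    and form_sym: "g u v = g v u"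
    and form_nondegenerate: "(\<And>v. g u v = 0) \<Longrightarrow> u = 0"
begin

lemma linear_form_left: "linear (\<lambda>u. g u w)"
  and linear_form_right: "linear (\<lambda>w. g u w)"
  using bilinear_form unfolding bilinear_def by blast+

lemma form_simps [simp]:
  "g (a + b) c = g a c + g b c" "g a (b + c) = g a b + g a c"
  "g (a - b) c = g a c - g b c" "g a (b - c) = g a b - g a c"
  "g (r *\<^sub>R a) c = r * g a c" "g a (r *\<^sub>R c) = r * g a c"
  "g (- a) c = - g a c" "g a (- c) = - g a c"
  "g 0 c = 0" "g a 0 = 0"
  using linear_add[OF linear_form_left] linear_add[OF linear_form_right]
    linear_diff[OF linear_form_left] linear_diff[OF linear_form_right]
    linear_scale[OF linear_form_left] linear_scale[OF linear_form_right]
    linear_neg[OF linear_form_left] linear_neg[OF linear_form_right]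
    linear_0[OF linear_form_left] linear_0[OF linear_form_right]
  by auto

lemma form_eqI: "(\<And>w. g u w = g u' w) \<Longrightarrow> u = u'"
  using form_nondegenerate[of "u - u'"] by simp

definition gram :: "'n \<Rightarrow> 'n" where
  "gram u = (\<Sum>b\<in>Basis. g u b *\<^sub>R b)"

lemma inner_gram: "gram u \<bullet> w = g u w"
  using Linear_Algebra.linear_componentwise[OF linear_form_right[of u], of w 1]
  unfolding gram_def inner_sum_left by (simp add: inner_commute mult.commute)

lemma linear_gram: "linear gram"
  by (rule linearI; subst vector_eq_rdot[symmetric]) (simp_all add: inner_gram inner_add_left)

lemma inj_gram: "inj gram"
proof (rule injI)
  fix u u' assume "gram u = gram u'"
  then show "u = u'" by (intro form_eqI) (metis inner_gram)
qed

lemma form_represents: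
  assumes "linear f"
  shows "\<exists>u. \<forall>w. g u w = f w"
proof -
  obtain u where u: "gram u = adjoint f 1"
    using linear_injective_imp_surjective[OF linear_gram inj_gram] by (metis surjD)
  have "g u w = f w" for w
    using adjoint_works[OF assms, of w 1] by (simp add: inner_gram[symmetric] u inner_commute)
  then show ?thesis by blast
qed

lemma the_form_representative_eq:
  assumes "\<And>w. g u w = f w"
  shows "(THE u. \<forall>w. g u w = f w) = u"
  using assms by (intro the_equality) (auto intro: form_eqI)

lemma form_the_form_representative:
  assumes "linear f"
  shows "g (THE u. \<forall>w. g u w = f w) w = f w"
  using form_represents[OF assms] the_form_representative_eq by metis

lemma form_has_vector_derivative:
  assumes "(f has_vector_derivative f') (at t within S)" "(h has_vector_derivative h') (at t within S)"
  shows "((\<lambda>s. g (f s) (h s)) has_real_derivative g (f t) h' + g f' (h t)) (at t within S)"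
  using bounded_bilinear.has_vector_derivative[OF bilinear_form[unfolded bilinear_conv_bounded_bilinear] assms]
  by (simp add: has_real_derivative_iff_has_vector_derivative)

end

section \<open>Two-step nilpotent Lie algebras with nondegenerate centre\<close>

locale two_step_metric = nondegenerate_form g
  for g :: "'n::euclidean_space \<Rightarrow> 'n \<Rightarrow> real" +
  fixes br :: "'n \<Rightarrow> 'n \<Rightarrow> 'n"
  assumes bilinear_bracket: "bilinear br"
    and bracket_skew: "br a b = - br b a"
    and bracket_bracket: "br (br a b) c = 0"
    and bracket_nonzero: "\<exists>a b. br a b \<noteq> 0"
    and center_nondegenerate:
      "u \<in> center br \<Longrightarrow> (\<And>v. v \<in> center br \<Longrightarrow> g u v = 0) \<Longrightarrow> u = 0"
begin

abbreviation Z where "Z \<equiv> center br"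
abbreviation V where "V \<equiv> perp_center g br"

lemma bracket_simps [simp]:
  "br (a + b) c = br a c + br b c" "br a (b + c) = br a b + br a c"
  "br (a - b) c = br a c - br b c" "br a (b - c) = br a b - br a c"
  "br (r *\<^sub>R a) c = r *\<^sub>R br a c" "br a (r *\<^sub>R c) = r *\<^sub>R br a c"
  "br (- a) c = - br a c" "br a (- c) = - br a c"
  "br 0 c = 0" "br a 0 = 0"
proof -
  have l: "linear (\<lambda>a. br a c)" "linear (\<lambda>c. br a c)" for a c
    using bilinear_bracket unfolding bilinear_def by blast+
  show "br (a + b) c = br a c + br b c" "br a (b + c) = br a b + br a c"
    "br (a - b) c = br a c - br b c" "br a (b - c) = br a b - br a c"
    "br (r *\<^sub>R a) c = r *\<^sub>R br a c" "br a (r *\<^sub>R c) = r *\<^sub>R br a c"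
    "br (- a) c = - br a c" "br a (- c) = - br a c"
    "br 0 c = 0" "br a 0 = 0"
    using linear_add[OF l(1)] linear_add[OF l(2)] linear_diff[OF l(1)] linear_diff[OF l(2)]
      linear_scale[OF l(1)] linear_scale[OF l(2)] linear_neg[OF l(1)] linear_neg[OF l(2)]
      linear_0[OF l(1)] linear_0[OF l(2)]
    by auto
qed

lemma bracket_in_center: "br a b \<in> Z"
  using bracket_bracket unfolding center_def by auto

lemma bracket_center_left: "a \<in> Z \<Longrightarrow> br a b = 0"
  unfolding center_def by auto

lemma bracket_center_right: "b \<in> Z \<Longrightarrow> br a b = 0"
  using bracket_center_left bracket_skew by (metis neg_equal_0_iff_equal)

lemma subspace_center: "subspace Z"
  unfolding subspace_def center_def by auto

lemma subspace_perp: "subspace V"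
  unfolding subspace_def perp_center_def by auto

lemma form_center_perp: "a \<in> Z \<Longrightarrow> b \<in> V \<Longrightarrow> g a b = 0"
  and form_perp_center: "a \<in> Z \<Longrightarrow> b \<in> V \<Longrightarrow> g b a = 0"
  unfolding perp_center_def by (auto simp: form_sym[of a b])

lemma center_perp_eq_0: "a \<in> Z \<Longrightarrow> a \<in> V \<Longrightarrow> a = 0"
  by (rule center_nondegenerate) (auto intro: form_perp_center)

text \<open>A dimension count: gram maps V isomorphically onto the Euclidean orthogonal complement
  of Z.\<close>
lemma center_plus_perp: "\<exists>a\<in>Z. \<exists>b\<in>V. u = a + b"
proof -
  let ?Zc = "{y. \<forall>x\<in>Z. orthogonal x y}"
  have "gram ` V = ?Zc"
  proof
    show "gram ` V \<subseteq> ?Zc"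
      by (auto simp: orthogonal_def inner_commute[of _ "gram _"] inner_gram perp_center_def)
    show "?Zc \<subseteq> gram ` V"
    proof
      fix y assume y: "y \<in> ?Zc"
      obtain u where u: "y = gram u"
        using linear_injective_imp_surjective[OF linear_gram inj_gram] by (metis surjD)
      have "u \<in> V" using y unfolding u perp_center_def
        by (auto simp: orthogonal_def inner_commute[of _ "gram _"] inner_gram)
      then show "y \<in> gram ` V" using u by blast
    qed
  qed
  moreover have "dim (gram ` V) = dim V"
    using inj_gram by (intro dim_image_eq[OF linear_gram]) (auto simp: inj_on_def inj_def)
  moreover have "dim ?Zc + dim Z = DIM('n)"
    using dim_subspace_orthogonal_to_vectors[OF subspace_center subspace_UNIV] by (simp add: dim_UNIV)
  moreover have "Z \<inter> V = {0}"
    using center_perp_eq_0 subspace_0[OF subspace_center] subspace_0[OF subspace_perp] by auto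
  ultimately have "dim {a + b |a b. a \<in> Z \<and> b \<in> V} = DIM('n)"
    using dim_sums_Int[OF subspace_center subspace_perp] by simp
  then have "span {a + b |a b. a \<in> Z \<and> b \<in> V} = UNIV"
    by (simp only: dim_eq_full)
  then have "{a + b |a b. a \<in> Z \<and> b \<in> V} = UNIV"
    using span_eq_iff[THEN iffD2, OF subspace_sums[OF subspace_center subspace_perp]] by simp
  then show ?thesis by blast
qed

definition vpart :: "'n \<Rightarrow> 'n" where
  "vpart u = (SOME b. b \<in> V \<and> u - b \<in> Z)"

lemma vpart_in_perp: "vpart u \<in> V"
  and minus_vpart_in_center: "u - vpart u \<in> Z"
proof -
  obtain a b where "a \<in> Z" "b \<in> V" "u = a + b"
    using center_plus_perp by blast
  then have "\<exists>b. b \<in> V \<and> u - b \<in> Z" by auto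
  then have "vpart u \<in> V \<and> u - vpart u \<in> Z"
    unfolding vpart_def by (rule someI_ex)
  then show "vpart u \<in> V" "u - vpart u \<in> Z" by blast+
qed

lemma vpart_unique:
  assumes "b \<in> V" "u - b \<in> Z"
  shows "vpart u = b"
proof -
  have "vpart u - b \<in> V"
    using vpart_in_perp assms(1) subspace_diff[OF subspace_perp] by blast
  moreover have "vpart u - b = (u - b) - (u - vpart u)" by simp
  then have "vpart u - b \<in> Z"
    using minus_vpart_in_center assms(2) subspace_diff[OF subspace_center] by metis
  ultimately show ?thesis using center_perp_eq_0 by fastforce
qed

lemma vpart_perp: "b \<in> V \<Longrightarrow> vpart b = b"
  by (rule vpart_unique) (auto intro: subspace_0[OF subspace_center])

lemma vpart_center: "a \<in> Z \<Longrightarrow> vpart a = 0"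
  by (rule vpart_unique) (auto intro: subspace_0[OF subspace_perp])

lemma linear_vpart: "linear vpart"
proof (rule linearI)
  fix x y :: 'n and r :: real
  show "vpart (x + y) = vpart x + vpart y"
  proof (rule vpart_unique)
    show "vpart x + vpart y \<in> V"
      using vpart_in_perp subspace_add[OF subspace_perp] by blast
    show "x + y - (vpart x + vpart y) \<in> Z"
      using minus_vpart_in_center[of x] minus_vpart_in_center[of y]
        subspace_add[OF subspace_center, of "x - vpart x" "y - vpart y"]
      by (simp add: algebra_simps)
  qed
  show "vpart (r *\<^sub>R x) = r *\<^sub>R vpart x"
  proof (rule vpart_unique)
    show "r *\<^sub>R vpart x \<in> V"
      using vpart_in_perp subspace_scale[OF subspace_perp] by blast
    show "r *\<^sub>R x - r *\<^sub>R vpart x \<in> Z"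
      using minus_vpart_in_center[of x] subspace_scale[OF subspace_center, of "x - vpart x" r]
      by (simp add: algebra_simps)
  qed
qed

lemma vpart_idem [simp]: "vpart (vpart u) = vpart u"
  by (rule vpart_perp[OF vpart_in_perp])

lemma bracket_vpart: "br a b = br (vpart a) (vpart b)"
proof -
  have "br a b = br ((a - vpart a) + vpart a) ((b - vpart b) + vpart b)" by simp
  also have "\<dots> = br (vpart a) (vpart b)"
    using bracket_center_left[OF minus_vpart_in_center[of a]]
      bracket_center_right[OF minus_vpart_in_center[of b]]
    by (simp only: bracket_simps) simp
  finally show ?thesis .
qed

lemma form_perp_vpart: "a \<in> V \<Longrightarrow> g a w = g a (vpart w)"
proof -
  assume a: "a \<in> V"
  have "g a w = g a ((w - vpart w) + vpart w)" by simp
  also have "\<dots> = g a (vpart w)"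
    using form_perp_center[OF minus_vpart_in_center a] by simp
  finally show ?thesis .
qed

lemma form_vpart_perp: "w \<in> V \<Longrightarrow> g u w = g (vpart u) w"
  by (metis form_perp_vpart form_sym)

lemma perp_eqI:
  assumes a: "a \<in> V" and b: "b \<in> V" and eq: "\<And>w. w \<in> V \<Longrightarrow> g a w = g b w"
  shows "a = b"
proof (rule form_eqI)
  fix w
  have "g a w = g a (vpart w)" by (rule form_perp_vpart[OF a])
  also have "\<dots> = g b (vpart w)" by (rule eq[OF vpart_in_perp])
  also have "\<dots> = g b w" by (rule form_perp_vpart[OF b, symmetric])
  finally show "g a w = g b w" .
qed

lemma vpart_nonzero: "\<exists>u. vpart u \<noteq> 0"
proof -
  obtain a b where "br a b \<noteq> 0" using bracket_nonzero by blast
  then have "vpart a \<noteq> 0" using bracket_vpart[of a b] by auto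
  then show ?thesis by blast
qed

lemma lc_eqI:
  assumes "\<And>W. g u W = (g (br X Y) W - g (br Y W) X + g (br W X) Y) / 2"
  shows "lc g br X Y = u"
  unfolding lc_def using assms by (rule the_form_representative_eq)

lemma form_lc: "g (lc g br X Y) W = (g (br X Y) W - g (br Y W) X + g (br W X) Y) / 2"
  unfolding lc_def by (rule form_the_form_representative) (rule linearI; simp add: field_simps)

lemma linear_lc: "linear (lc g br X)"
  by (rule linearI; rule lc_eqI) (simp_all add: form_lc field_simps)

lemma lc_zero_left: "lc g br 0 Y = 0"
  by (rule lc_eqI) simp

lemma lc_center_center: "z \<in> Z \<Longrightarrow> w \<in> Z \<Longrightarrow> lc g br z w = 0"
  by (rule lc_eqI) (simp add: bracket_center_left bracket_center_right)

lemma linear_ricci: "linear (ricci g br Y)"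
proof -
  have "linear (curv g br b Y)" for b
    unfolding curv_def
    by (intro linear_compose_sub linear_compose[OF linear_lc linear_lc, unfolded o_def] linear_lc)
  then have "linear (\<lambda>W. curv g br b Y W \<bullet> b)" for b
    using linear_compose[OF _ bounded_linear.linear[OF bounded_linear_inner_left]]
    unfolding o_def by blast
  then show ?thesis
    unfolding ricci_def by (intro linear_compose_sum) auto
qed

lemma form_ricci_op: "g (ricci_op g br Y) W = ricci g br Y W"
  unfolding ricci_op_def by (rule form_the_form_representative[OF linear_ricci])

end

section \<open>Modified H-type algebras\<close>

locale modified_H_type_structure = two_step_metric g br
  for g :: "'n::euclidean_space \<Rightarrow> 'n \<Rightarrow> real" and br +
  fixes \<phi> :: "'n \<Rightarrow> real" and B :: "'n \<Rightarrow> 'n \<Rightarrow> real" and j :: "'n \<Rightarrow> 'n \<Rightarrow> 'n"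
  assumes bilinear_B: "bilinear B"
    and B_sym: "B u v = B v u"
    and phi_B: "z \<in> center br \<Longrightarrow> \<phi> z = B z z"
    and j_perp: "z \<in> center br \<Longrightarrow> x \<in> perp_center g br \<Longrightarrow> j z x \<in> perp_center g br"
    and form_bracket_j: "z \<in> center br \<Longrightarrow> x \<in> perp_center g br \<Longrightarrow> y \<in> perp_center g br \<Longrightarrow>
      g (br x y) z = g y (j z x)"
    and j_j: "z \<in> center br \<Longrightarrow> x \<in> perp_center g br \<Longrightarrow> j z (j z x) = - \<phi> z *\<^sub>R x"
begin

lemma form_j_left: "z \<in> Z \<Longrightarrow> x \<in> V \<Longrightarrow> y \<in> V \<Longrightarrow> g (j z x) y = g (br x y) z"
  using form_bracket_j[of z x y] form_sym[of "j z x" y] by simp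

lemma form_j_skew:
  assumes "z \<in> Z" "a \<in> V" "b \<in> V"
  shows "g (j z a) b = - g a (j z b)"
  using form_j_left[OF assms] form_bracket_j[OF assms(1,3,2)] bracket_skew[of a b] by simp

lemma form_j_self: "z \<in> Z \<Longrightarrow> a \<in> V \<Longrightarrow> g a (j z a) = 0"
  using form_j_skew[of z a a] form_sym[of a "j z a"] by simp

lemma j_add:
  assumes z: "z \<in> Z" and x: "x \<in> V" and y: "y \<in> V"
  shows "j z (x + y) = j z x + j z y"
proof (rule perp_eqI)
  have xy: "x + y \<in> V" using x y subspace_add[OF subspace_perp] by blast
  then show "j z (x + y) \<in> V" "j z x + j z y \<in> V"
    using j_perp z x y subspace_add[OF subspace_perp] by blast+
  show "g (j z (x + y)) w = g (j z x + j z y) w" if "w \<in> V" for w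
    using form_j_left[OF z xy that] form_j_left[OF z x that] form_j_left[OF z y that] by simp
qed

lemma j_scale:
  assumes z: "z \<in> Z" and x: "x \<in> V"
  shows "j z (r *\<^sub>R x) = r *\<^sub>R j z x"
proof (rule perp_eqI)
  have rx: "r *\<^sub>R x \<in> V" using x subspace_scale[OF subspace_perp] by blast
  then show "j z (r *\<^sub>R x) \<in> V" "r *\<^sub>R j z x \<in> V"
    using j_perp z x subspace_scale[OF subspace_perp] by blast+
  show "g (j z (r *\<^sub>R x)) w = g (r *\<^sub>R j z x) w" if "w \<in> V" for w
    using form_j_left[OF z rx that] form_j_left[OF z x that] by simp
qed

lemma j_add_center:
  assumes z: "z \<in> Z" and w: "w \<in> Z" and x: "x \<in> V"
  shows "j (z + w) x = j z x + j w x"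
proof (rule perp_eqI)
  have zw: "z + w \<in> Z" using z w subspace_add[OF subspace_center] by blast
  then show "j (z + w) x \<in> V" "j z x + j w x \<in> V"
    using j_perp z w x subspace_add[OF subspace_perp] by blast+
  show "g (j (z + w) x) y = g (j z x + j w x) y" if "y \<in> V" for y
    using form_j_left[OF zw x that] form_j_left[OF z x that] form_j_left[OF w x that] by simp
qed

text \<open>Polarisation of j(z) j(z) = - \<phi>(z) id.\<close>
lemma j_anticommute:
  assumes z: "z \<in> Z" and w: "w \<in> Z" and a: "a \<in> V"
  shows "j z (j w a) + j w (j z a) = - (2 * B z w) *\<^sub>R a"
proof -
  have zw: "z + w \<in> Z" using z w subspace_add[OF subspace_center] by blast
  have ja: "j z a \<in> V" "j w a \<in> V" using j_perp z w a by auto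
  have "j (z + w) (j (z + w) a) = j z (j z a) + j z (j w a) + j w (j z a) + j w (j w a)"
  proof -
    have s: "j z a + j w a \<in> V" using ja subspace_add[OF subspace_perp] by blast
    have "j (z + w) (j (z + w) a) = j z (j z a + j w a) + j w (j z a + j w a)"
      using j_add_center[OF z w a] j_add_center[OF z w s] by simp
    then show ?thesis using j_add[OF z ja] j_add[OF w ja] by simp
  qed
  moreover have "B (z + w) (z + w) = B z z + 2 * B z w + B w w"
    by (simp add: bilinear_ladd[OF bilinear_B] bilinear_radd[OF bilinear_B] B_sym[of w z])
  ultimately show ?thesis
    using j_j[OF zw a] j_j[OF z a] j_j[OF w a] phi_B[OF z] phi_B[OF w] phi_B[OF zw]
    by (simp add: algebra_simps)
qed

lemma form_j_j:
  assumes z: "z \<in> Z" and w: "w \<in> Z" and a: "a \<in> V"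
  shows "g (j z a) (j w a) = B z w * g a a"
proof -
  have "g (j z a) (j w a) = - g a (j z (j w a))"
    by (rule form_j_skew[OF z a j_perp[OF w a]])
  moreover have "g (j z a) (j w a) = - g a (j w (j z a))"
    using form_j_skew[OF w a j_perp[OF z a]] form_sym[of "j z a" "j w a"] by simp
  moreover have "g a (j z (j w a) + j w (j z a)) = - (2 * B z w) * g a a"
    using j_anticommute[OF z w a] by simp
  ultimately show ?thesis by simp
qed

text \<open>J z extends j z from V to the whole algebra, as traces are taken over the standard basis.\<close>
definition J :: "'n \<Rightarrow> 'n \<Rightarrow> 'n" where
  "J z u = j z (vpart u)"

lemma J_perp: "z \<in> Z \<Longrightarrow> J z u \<in> V"
  unfolding J_def using j_perp vpart_in_perp by blast

lemma J_on_perp: "a \<in> V \<Longrightarrow> J z a = j z a"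
  unfolding J_def using vpart_perp by simp

lemma linear_J: "z \<in> Z \<Longrightarrow> linear (J z)"
  by (rule linearI) (simp_all add: J_def linear_add[OF linear_vpart] linear_scale[OF linear_vpart]
      j_add j_scale vpart_in_perp)

lemma lc_left_center:
  assumes w: "w \<in> Z"
  shows "lc g br b w = - (1/2) *\<^sub>R J w b"
proof (rule lc_eqI)
  fix W
  have "g (br W b) w = g (br (vpart W) (vpart b)) w"
    by (simp only: bracket_vpart[of W b])
  also have "\<dots> = g (vpart b) (j w (vpart W))"
    by (rule form_bracket_j[OF w vpart_in_perp vpart_in_perp])
  also have "\<dots> = g (j w (vpart W)) (vpart b)"
    by (rule form_sym)
  also have "\<dots> = - g (j w (vpart b)) (vpart W)"
    by (simp only: form_j_skew[OF w vpart_in_perp vpart_in_perp] form_sym[of "vpart W"])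
  also have "\<dots> = - g (J w b) W"
    unfolding J_def by (simp only: form_perp_vpart[OF j_perp[OF w vpart_in_perp], symmetric])
  finally show "g (- (1/2) *\<^sub>R J w b) W = (g (br b w) W - g (br w W) b + g (br W b) w) / 2"
    by (simp add: bracket_center_left[OF w] bracket_center_right[OF w])
qed

lemma lc_center_perp:
  assumes z: "z \<in> Z" and u: "u \<in> V"
  shows "lc g br z u = - (1/2) *\<^sub>R J z u"
proof (rule lc_eqI)
  fix W
  have "g (br u W) z = g (br u (vpart W)) z"
    using bracket_vpart[of u W] vpart_perp[OF u] by simp
  also have "\<dots> = g (vpart W) (j z u)"
    by (rule form_bracket_j[OF z u vpart_in_perp])
  also have "\<dots> = g (j z u) (vpart W)"
    by (rule form_sym)
  also have "\<dots> = g (J z u) W"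
    by (simp only: form_perp_vpart[OF j_perp[OF z u], symmetric] J_on_perp[OF u])
  finally show "g (- (1/2) *\<^sub>R J z u) W = (g (br z u) W - g (br u W) z + g (br W z) u) / 2"
    by (simp add: bracket_center_left[OF z] bracket_center_right[OF z])
qed

lemma curv_center_center:
  assumes z: "z \<in> Z" and w: "w \<in> Z"
  shows "curv g br b z w = - (1/4) *\<^sub>R J z (J w b)"
proof -
  have "curv g br b z w = - lc g br z (lc g br b w)"
    unfolding curv_def lc_center_center[OF z w] bracket_center_right[OF z] lc_zero_left
    by (simp add: linear_0[OF linear_lc])
  also have "\<dots> = - lc g br z (- (1/2) *\<^sub>R J w b)"
    by (simp only: lc_left_center[OF w])
  also have "\<dots> = - (1/4) *\<^sub>R J z (J w b)"
    by (simp add: linear_neg[OF linear_lc] linear_scale[OF linear_lc] lc_center_perp[OF z J_perp[OF w]])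
  finally show ?thesis .
qed

lemma ricci_center:
  assumes z: "z \<in> Z" and w: "w \<in> Z"
  shows "ricci g br z w = B z w * lin_trace vpart / 4"
proof -
  have ricci: "ricci g br z w = - (1/4) * lin_trace (J z \<circ> J w)"
    unfolding ricci_def lin_trace_def curv_center_center[OF z w] by (simp add: sum_distrib_left)
  have comm: "lin_trace (J z \<circ> J w) = lin_trace (J w \<circ> J z)"
    by (rule lin_trace_comp_commute[OF linear_J[OF z] linear_J[OF w]])
  have anti: "J z (J w u) + J w (J z u) = - (2 * B z w) *\<^sub>R vpart u" for u
    unfolding J_on_perp[OF J_perp[OF w]] J_on_perp[OF J_perp[OF z]]
    unfolding J_def by (rule j_anticommute[OF z w vpart_in_perp])
  have "lin_trace (J z \<circ> J w) + lin_trace (J w \<circ> J z)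
      = (\<Sum>b\<in>Basis. (J z (J w b) + J w (J z b)) \<bullet> b)"
    unfolding lin_trace_def o_def inner_add_left by (rule sum.distrib[symmetric])
  also have "\<dots> = - (2 * B z w) * lin_trace vpart"
    unfolding anti lin_trace_def by (simp add: sum_distrib_left)
  finally have "lin_trace (J z \<circ> J w) = - (B z w * lin_trace vpart)"
    using comm by linarith
  then show ?thesis using ricci by simp
qed

lemma B_eq_0_if_ricci_op_eq_0:
  assumes "z \<in> Z" "w \<in> Z" "ricci_op g br z = 0"
  shows "B z w = 0"
proof -
  obtain u where "vpart u \<noteq> 0" using vpart_nonzero by blast
  then have "lin_trace vpart > 0"
    by (rule lin_trace_idempotent_pos[OF linear_vpart vpart_idem])
  moreover have "ricci g br z w = 0"
    using form_ricci_op[of z w] assms(3) by simp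
  ultimately show ?thesis using ricci_center[OF assms(1,2)] by simp
qed

end

section \<open>Geodesics through the identity\<close>

locale H_type_geodesic = modified_H_type_structure g br \<phi> B j
  for g :: "'n::euclidean_space \<Rightarrow> 'n \<Rightarrow> real" and br \<phi> B j +
  fixes I :: "real set" and \<gamma> v :: "real \<Rightarrow> 'n" and z0 x0 :: 'n
  assumes interval: "is_interval I" and zero_in_I: "0 \<in> I"
    and velocity: "t \<in> I \<Longrightarrow> (\<gamma> has_vector_derivative v t) (at t within I)"
    and euler_lagrange: "t \<in> I \<Longrightarrow> \<exists>D.
      ((\<lambda>h. lmetric g br (\<gamma> t + h *\<^sub>R w) (v t) (v t)) has_real_derivative D) (at 0) \<and>
      ((\<lambda>s. lmetric g br (\<gamma> s) (v s) w) has_real_derivative D / 2) (at t within I)"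
    and initial_point: "\<gamma> 0 = 0"
    and initial_velocity: "v 0 = z0 + x0"
    and z0_center: "z0 \<in> center br"
    and x0_perp: "x0 \<in> perp_center g br"
begin

lemma convex_I: "convex I"
  by (rule is_interval_convex[OF interval])

text \<open>The left-translated velocity (dL_\<gamma>)^-1 \<gamma>' (cf. lmetric).\<close>
definition body_velocity :: "real \<Rightarrow> 'n" where
  "body_velocity t = v t - (1/2) *\<^sub>R br (\<gamma> t) (v t)"

lemma body_velocity_0: "body_velocity 0 = z0 + x0"
  by (simp add: body_velocity_def initial_point initial_velocity)

lemma lmetric_has_derivative:
  assumes t: "t \<in> I"
  shows "((\<lambda>s. lmetric g br (\<gamma> s) (v s) w) has_real_derivative
    - g (body_velocity t) (br w (v t)) / 2) (at t within I)"
proof -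
  obtain D where D: "((\<lambda>h. lmetric g br (\<gamma> t + h *\<^sub>R w) (v t) (v t)) has_real_derivative D) (at 0)"
    and EL: "((\<lambda>s. lmetric g br (\<gamma> s) (v s) w) has_real_derivative D / 2) (at t within I)"
    using euler_lagrange[OF t] by blast
  define c where "c = (1/2) *\<^sub>R br w (v t)"
  have "v t - (1/2) *\<^sub>R br (\<gamma> t + h *\<^sub>R w) (v t) = body_velocity t - h *\<^sub>R c" for h
    by (simp add: body_velocity_def c_def algebra_simps)
  then have "lmetric g br (\<gamma> t + h *\<^sub>R w) (v t) (v t)
      = g (body_velocity t - h *\<^sub>R c) (body_velocity t - h *\<^sub>R c)" for h
    by (simp only: lmetric_def)
  moreover have c': "((\<lambda>h. body_velocity t - h *\<^sub>R c) has_vector_derivative - c) (at 0)"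
    by (auto intro!: derivative_eq_intros)
  have "g (body_velocity t - 0 *\<^sub>R c) (- c) + g (- c) (body_velocity t - 0 *\<^sub>R c)
      = - g (body_velocity t) (br w (v t))"
    by (simp add: c_def form_sym[of "br w (v t)"])
  ultimately have "((\<lambda>h. lmetric g br (\<gamma> t + h *\<^sub>R w) (v t) (v t)) has_real_derivative
      - g (body_velocity t) (br w (v t))) (at 0)"
    using form_has_vector_derivative[OF c' c'] by simp
  then have "D = - g (body_velocity t) (br w (v t))"
    by (rule DERIV_unique[OF D])
  then show ?thesis using EL by simp
qed

lemma center_body_velocity:
  assumes w: "w \<in> Z" and t: "t \<in> I"
  shows "g (body_velocity t) w = g z0 w"
proof -
  have lmetric_eq: "lmetric g br (\<gamma> s) (v s) w = g (body_velocity s) w" for s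
    by (simp add: lmetric_def body_velocity_def bracket_center_right[OF w])
  have "g (body_velocity t) w = g (body_velocity 0) w"
  proof (rule has_real_derivative_zero_imp_eq[OF convex_I zero_in_I t])
    fix s assume "s \<in> I"
    then show "((\<lambda>s. g (body_velocity s) w) has_real_derivative 0) (at s within I)"
      using lmetric_has_derivative[of s w] by (simp add: lmetric_eq bracket_center_left[OF w])
  qed
  also have "\<dots> = g z0 w"
    using form_perp_center[OF w x0_perp] by (simp add: body_velocity_0)
  finally show ?thesis .
qed

lemma perp_velocity_conservation:
  assumes w: "w \<in> V" and t: "t \<in> I"
  shows "g (v t) w - g z0 (br (\<gamma> t) w) = g x0 w"
proof -
  define F where "F s = lmetric g br (\<gamma> s) (v s) w - (1/2) * g z0 (br (\<gamma> s) w)" for s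
  have F_eq: "F s = g (v s) w - g z0 (br (\<gamma> s) w)" if "s \<in> I" for s
  proof -
    have "g (body_velocity s) w = g (v s) w"
      using form_center_perp[OF bracket_in_center w] by (simp add: body_velocity_def)
    moreover have "g (body_velocity s) (br (\<gamma> s) w) = g z0 (br (\<gamma> s) w)"
      by (rule center_body_velocity[OF bracket_in_center that])
    moreover have "F s = g (body_velocity s) w - (1/2) * g (body_velocity s) (br (\<gamma> s) w)
        - (1/2) * g z0 (br (\<gamma> s) w)"
      unfolding F_def lmetric_def body_velocity_def[symmetric] by simp
    ultimately show ?thesis by simp
  qed
  have "F t = F 0"
  proof (rule has_real_derivative_zero_imp_eq[OF convex_I zero_in_I t])
    fix s assume s: "s \<in> I"
    have "linear (\<lambda>u. g z0 (br u w))" by (rule linearI) simp_all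
    then have "((\<lambda>s. g z0 (br (\<gamma> s) w)) has_real_derivative g z0 (br (v s) w)) (at s within I)"
      using linear_has_vector_derivative[OF _ velocity[OF s]]
      by (simp add: has_real_derivative_iff_has_vector_derivative)
    then have "(F has_real_derivative
        - g (body_velocity s) (br w (v s)) / 2 - (1/2) * g z0 (br (v s) w)) (at s within I)"
      unfolding F_def by (intro DERIV_diff lmetric_has_derivative[OF s] DERIV_cmult)
    moreover have "g (body_velocity s) (br w (v s)) = - g z0 (br (v s) w)"
      using center_body_velocity[OF bracket_in_center s] bracket_skew[of w "v s"] form_sym[of z0] by simp
    ultimately show "(F has_real_derivative 0) (at s within I)" by simp
  qed
  then show ?thesis
    using F_eq[OF t] F_eq[OF zero_in_I] form_center_perp[OF z0_center w]
    by (simp add: initial_point initial_velocity)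
qed

lemma vpart_velocity:
  assumes t: "t \<in> I"
  shows "vpart (v t) = x0 + J z0 (\<gamma> t)"
proof (rule perp_eqI)
  show "vpart (v t) \<in> V" "x0 + J z0 (\<gamma> t) \<in> V"
    using vpart_in_perp x0_perp J_perp[OF z0_center] subspace_add[OF subspace_perp] by blast+
  fix w assume w: "w \<in> V"
  have "g z0 (br (\<gamma> t) w) = g (br (vpart (\<gamma> t)) w) z0"
    using form_sym[of z0] bracket_vpart[of "\<gamma> t" w] vpart_perp[OF w] by simp
  also have "\<dots> = g w (J z0 (\<gamma> t))"
    unfolding J_def by (rule form_bracket_j[OF z0_center vpart_in_perp w])
  also have "\<dots> = g (J z0 (\<gamma> t)) w"
    by (rule form_sym)
  finally show "g (vpart (v t)) w = g (x0 + J z0 (\<gamma> t)) w"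
    using perp_velocity_conservation[OF w t] form_vpart_perp[OF w, of "v t"] by simp
qed

lemma J_has_derivative:
  assumes "w \<in> Z" "t \<in> I"
  shows "((\<lambda>s. J w (\<gamma> s)) has_vector_derivative j w (vpart (v t))) (at t within I)"
  using linear_has_vector_derivative[OF linear_J velocity] assms by (simp add: J_def)

lemma vpart_velocity_has_derivative:
  assumes t: "t \<in> I"
  shows "((\<lambda>s. vpart (v s)) has_vector_derivative j z0 (vpart (v t))) (at t within I)"
proof -
  have "((\<lambda>s. x0 + J z0 (\<gamma> s)) has_vector_derivative j z0 (vpart (v t))) (at t within I)"
    using has_vector_derivative_add[OF has_vector_derivative_const J_has_derivative[OF z0_center t]]
    by simp
  then show ?thesis
    by (rule has_vector_derivative_transform[OF t vpart_velocity, rotated])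
qed

lemma vpart_velocity_energy:
  assumes t: "t \<in> I"
  shows "g (vpart (v t)) (vpart (v t)) = g x0 x0"
proof -
  have "g (vpart (v t)) (vpart (v t)) = g (vpart (v 0)) (vpart (v 0))"
  proof (rule has_real_derivative_zero_imp_eq[OF convex_I zero_in_I t])
    fix s assume s: "s \<in> I"
    have "g (vpart (v s)) (j z0 (vpart (v s))) = 0"
      by (rule form_j_self[OF z0_center vpart_in_perp])
    then show "((\<lambda>s. g (vpart (v s)) (vpart (v s))) has_real_derivative 0) (at s within I)"
      using form_has_vector_derivative[OF vpart_velocity_has_derivative[OF s]
          vpart_velocity_has_derivative[OF s]]
        form_sym[of "j z0 (vpart (v s))"]
      by simp
  qed
  also have "vpart (v 0) = x0"
    using vpart_center[OF z0_center] vpart_perp[OF x0_perp]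
    by (simp add: initial_velocity linear_add[OF linear_vpart])
  finally show ?thesis .
qed

context
  assumes B_z0_x0: "\<And>w. w \<in> center br \<Longrightarrow> B z0 w * g x0 x0 = 0"
begin

text \<open>With x = vpart \<circ> \<gamma>, the function P = g([x, x'], w) solves
  P'' = - \<phi>(z0) P + B(z0, w) g(x', x') with zero initial data, and by hypothesis the
  inhomogeneous term vanishes.\<close>
lemma bracket_vpart_velocity_vanishes:
  assumes w: "w \<in> Z" and t: "t \<in> I"
  shows "g (br (vpart (\<gamma> t)) (vpart (v t))) w = 0"
proof -
  define P where "P s = g (vpart (v s)) (J w (\<gamma> s))" for s
  define Q where "Q s = g (j z0 (vpart (v s))) (J w (\<gamma> s))" for s
  have P': "(P has_real_derivative Q s) (at s within I)" if s: "s \<in> I" for s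
  proof -
    have "g (vpart (v s)) (j w (vpart (v s))) = 0"
      by (rule form_j_self[OF w vpart_in_perp])
    then show ?thesis
      using form_has_vector_derivative[OF vpart_velocity_has_derivative[OF s] J_has_derivative[OF w s]]
      unfolding P_def Q_def by simp
  qed
  have Q': "(Q has_real_derivative - \<phi> z0 * P s) (at s within I)" if s: "s \<in> I" for s
  proof -
    have jj: "((\<lambda>s. j z0 (vpart (v s))) has_vector_derivative j z0 (j z0 (vpart (v s)))) (at s within I)"
      using linear_has_vector_derivative[OF linear_J[OF z0_center] vpart_velocity_has_derivative[OF s]]
      by (simp add: J_def vpart_perp[OF j_perp[OF z0_center vpart_in_perp]])
    have "g (j z0 (vpart (v s))) (j w (vpart (v s))) = B z0 w * g x0 x0"
      using form_j_j[OF z0_center w vpart_in_perp] vpart_velocity_energy[OF s] by simp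
    also have "\<dots> = 0"
      by (rule B_z0_x0[OF w])
    finally show ?thesis
      using form_has_vector_derivative[OF jj J_has_derivative[OF w s]] j_j[OF z0_center vpart_in_perp]
      unfolding P_def Q_def by simp
  qed
  have "P t = 0"
    by (rule oscillator_zero_initial_values[OF convex_I zero_in_I P' Q'])
      (simp_all add: P_def Q_def initial_point linear_0[OF linear_J[OF w]] t)
  moreover have "g (br (vpart (\<gamma> t)) (vpart (v t))) w = P t"
    unfolding P_def J_def by (rule form_bracket_j[OF w vpart_in_perp vpart_in_perp])
  ultimately show ?thesis by simp
qed

lemma center_velocity:
  assumes w: "w \<in> Z" and t: "t \<in> I"
  shows "g (v t) w = g z0 w"
proof -
  have "g (v t) w = g (body_velocity t) w + (1/2) * g (br (vpart (\<gamma> t)) (vpart (v t))) w"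
    by (simp add: body_velocity_def bracket_vpart[symmetric])
  then show ?thesis
    using center_body_velocity[OF w t] bracket_vpart_velocity_vanishes[OF w t] by simp
qed

lemma center_position:
  assumes w: "w \<in> Z" and t: "t \<in> I"
  shows "g (\<gamma> t) w = t * g z0 w"
proof -
  have "g (\<gamma> t) w - t * g z0 w = g (\<gamma> 0) w - 0 * g z0 w"
  proof (rule has_real_derivative_zero_imp_eq[OF convex_I zero_in_I t])
    fix s assume s: "s \<in> I"
    have "((\<lambda>s. g (\<gamma> s) w) has_real_derivative g (v s) w) (at s within I)"
      using linear_has_vector_derivative[OF linear_form_left velocity[OF s]]
      by (simp add: has_real_derivative_iff_has_vector_derivative)
    then show "((\<lambda>s. g (\<gamma> s) w - s * g z0 w) has_real_derivative 0) (at s within I)"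
      using center_velocity[OF w s] by (auto intro!: derivative_eq_intros)
  qed
  then show ?thesis by (simp add: initial_point)
qed

lemma center_part_eq:
  assumes t: "t \<in> I" and z: "z \<in> Z" and x: "x \<in> V" and "\<gamma> t = z + x"
  shows "z = t *\<^sub>R z0"
proof -
  have "z - t *\<^sub>R z0 = 0"
  proof (rule center_nondegenerate)
    show "z - t *\<^sub>R z0 \<in> Z"
      using z z0_center subspace_diff[OF subspace_center] subspace_scale[OF subspace_center] by blast
    fix w assume w: "w \<in> Z"
    show "g (z - t *\<^sub>R z0) w = 0"
      using center_position[OF w t] form_perp_center[OF w x] \<open>\<gamma> t = z + x\<close> by simp
  qed
  then show ?thesis by simp
qed

end

end

lemma modified_H_type_structureE:
  assumes "modified_H_type g br \<phi>"
  obtains B j where "modified_H_type_structure g br \<phi> B j"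
proof -
  have tsn: "two_step_nilpotent br" and pm: "pr_metric g"
    and center: "\<forall>u\<in>center br. (\<forall>v\<in>center br. g u v = 0) \<longrightarrow> u = 0"
    and ex_B: "\<exists>B. bilinear B \<and> (\<forall>u v. B u v = B v u) \<and> (\<forall>z\<in>center br. \<phi> z = B z z)"
    and ex_j: "\<exists>j. (\<forall>z\<in>center br. \<forall>x\<in>perp_center g br. j z x \<in> perp_center g br) \<and>
      (\<forall>z\<in>center br. \<forall>x\<in>perp_center g br. \<forall>y\<in>perp_center g br. g (br x y) z = g y (j z x)) \<and>
      (\<forall>z\<in>center br. \<forall>x\<in>perp_center g br. j z (j z x) = - \<phi> z *\<^sub>R x)"
    using assms unfolding modified_H_type_def by blast+
  obtain B where B: "bilinear B" "\<forall>u v. B u v = B v u" "\<forall>z\<in>center br. \<phi> z = B z z"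
    using ex_B by blast
  obtain j where j: "\<forall>z\<in>center br. \<forall>x\<in>perp_center g br. j z x \<in> perp_center g br"
    "\<forall>z\<in>center br. \<forall>x\<in>perp_center g br. \<forall>y\<in>perp_center g br. g (br x y) z = g y (j z x)"
    "\<forall>z\<in>center br. \<forall>x\<in>perp_center g br. j z (j z x) = - \<phi> z *\<^sub>R x"
    using ex_j by blast
  have "nondegenerate_form g"
    by (rule nondegenerate_form.intro) (use pm[unfolded pr_metric_def] in blast)+
  then have "two_step_metric g br"
    by (rule two_step_metric.intro[OF _ two_step_metric_axioms.intro])
      (use tsn[unfolded two_step_nilpotent_def] center in blast)+
  then have "modified_H_type_structure g br \<phi> B j"
    by (rule modified_H_type_structure.intro[OF _ modified_H_type_structure_axioms.intro])
      (use B j in blast)+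
  then show thesis by (rule that)
qed

lemma geodesic_center_part:
  assumes H: "modified_H_type_structure g br \<phi> B j"
    and I: "is_interval I" "0 \<in> I"
    and geodesic: "is_geodesic g br I \<gamma>" and "\<gamma> 0 = 0"
    and \<gamma>'_0: "(\<gamma> has_vector_derivative (z0 + x0)) (at 0 within I)"
    and "z0 \<in> center br" "x0 \<in> perp_center g br"
    and B_z0_x0: "\<And>w. w \<in> center br \<Longrightarrow> B z0 w * g x0 x0 = 0"
    and t: "t \<in> I" and z: "z \<in> center br" and x: "x \<in> perp_center g br" and "\<gamma> t = z + x"
  shows "z = t *\<^sub>R z0"
proof -
  interpret modified_H_type_structure g br \<phi> B j by (rule H)
  show ?thesis
  proof (cases "I = {0}")
    case True
    \<comment> \<open>Derivatives within a singleton are not unique, so the initial velocity says nothing here.\<close>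
    then have "t = 0" using t by simp
    then have "z = - x" using \<open>\<gamma> 0 = 0\<close> \<open>\<gamma> t = z + x\<close> by (simp add: eq_neg_iff_add_eq_0)
    then have "z = 0" using center_perp_eq_0 z x subspace_neg[OF subspace_perp] by (metis minus_minus)
    then show ?thesis using \<open>t = 0\<close> by simp
  next
    case False
    obtain v where v: "\<forall>t\<in>I. (\<gamma> has_vector_derivative v t) (at t within I)"
      and EL: "\<forall>t\<in>I. \<forall>w. \<exists>D.
        ((\<lambda>h. lmetric g br (\<gamma> t + h *\<^sub>R w) (v t) (v t)) has_real_derivative D) (at 0) \<and>
        ((\<lambda>s. lmetric g br (\<gamma> s) (v s) w) has_real_derivative D / 2) (at t within I)"
      using geodesic unfolding is_geodesic_def by blast
    have "I \<noteq> {a}" for a using False I(2) by auto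
    then have "0 islimpt I"
      by (rule connected_imp_perfect[OF is_interval_connected[OF I(1)] I(2)])
    then have "at 0 within I \<noteq> bot"
      using trivial_limit_within by blast
    then have "v 0 = z0 + x0"
      by (rule vector_derivative_unique_within[OF _ v[rule_format, OF I(2)] \<gamma>'_0])
    then have "H_type_geodesic g br \<phi> B j I \<gamma> v z0 x0"
    proof (intro H_type_geodesic.intro[OF H] H_type_geodesic_axioms.intro)
      fix t w assume "t \<in> I"
      then show "(\<gamma> has_vector_derivative v t) (at t within I)"
        and "\<exists>D. ((\<lambda>h. lmetric g br (\<gamma> t + h *\<^sub>R w) (v t) (v t)) has_real_derivative D) (at 0) \<and>
          ((\<lambda>s. lmetric g br (\<gamma> s) (v s) w) has_real_derivative D / 2) (at t within I)"
        using v EL by blast+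
    qed (use assms in auto)
    then show ?thesis
      using B_z0_x0 t z x \<open>\<gamma> t = z + x\<close> by (rule H_type_geodesic.center_part_eq)
  qed
qed

theorem corollary4p7:
  fixes g :: "'n::euclidean_space \<Rightarrow> 'n \<Rightarrow> real"
    and br :: "'n \<Rightarrow> 'n \<Rightarrow> 'n"
    and \<phi> :: "'n \<Rightarrow> real"
    and I :: "real set"
    and \<gamma> z x :: "real \<Rightarrow> 'n"
    and z0 x0 :: 'n
  assumes "modified_H_type g br \<phi>"
    and "is_interval I" and "0 \<in> I"
    and "\<forall>t\<in>I. z t \<in> center br \<and> x t \<in> perp_center g br \<and> \<gamma> t = z t + x t"
    and "is_geodesic g br I \<gamma>"
    and "\<gamma> 0 = 0"
    and "(\<gamma> has_vector_derivative (z0 + x0)) (at 0 within I)"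
    and "z0 \<in> center br" and "x0 \<in> perp_center g br"
    and "z0 \<noteq> 0" and "x0 \<noteq> 0"
    and "g x0 x0 = 0 \<or> ricci_op g br z0 = 0"
  shows "\<forall>t\<in>I. z t = t *\<^sub>R z0"
proof
  fix t assume "t \<in> I"
  obtain B j where H: "modified_H_type_structure g br \<phi> B j"
    using assms(1) by (rule modified_H_type_structureE)
  have "B z0 w * g x0 x0 = 0" if "w \<in> center br" for w
    using assms(12) modified_H_type_structure.B_eq_0_if_ricci_op_eq_0[OF H assms(8) that] by auto
  then show "z t = t *\<^sub>R z0"
    using geodesic_center_part[OF H assms(2,3,5,6,7,8,9)] assms(4) \<open>t \<in> I\<close> by blast
qed

end
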